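(* Each of the following eight sets of four generalized Bell states in $\mathbb{C}^4\otimes\mathbb{C}^4$ is perfectly distinguishable by one-way LOCC using only projective measurements: $\{\ket{\psi_{00}}\}\cup T$ with $T$ one of $\{\ket{\psi_{01}},\ket{\psi_{02}},\ket{\psi_{12}}\}$, $\{\ket{\psi_{01}},\ket{\psi_{02}},\ket{\psi_{30}}\}$, $\{\ket{\psi_{01}},\ket{\psi_{11}},\ket{\psi_{21}}\}$, $\{\ket{\psi_{01}},\ket{\psi_{12}},\ket{\psi_{20}}\}$, $\{\ket{\psi_{01}},\ket{\psi_{20}},\ket{\psi_{30}}\}$, $\{\ket{\psi_{01}},\ket{\psi_{21}},\ket{\psi_{33}}\}$, $\{\ket{\psi_{02}},\ket{\psi_{10}},\ket{\psi_{21}}\}$, $\{\ket{\psi_{02}},\ket{\psi_{21}},\ket{\psi_{32}}\}$.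
   Context: Generalized Bell states in $\mathbb{C}^4\otimes\mathbb{C}^4$ (Alice holds the first factor, Bob the second): $\ket{\psi_{nm}}=\frac12\sum_{j=0}^{3}e^{2\pi i jn/4}\ket{j}_A\ket{j\oplus_4 m}_B$ for $n,m\in\{0,1,2,3\}$, where $j\oplus_4 m=(j+m)\bmod 4$. Perfect distinguishability by one-way LOCC using only projective measurements means: one party performs a projective measurement on her subsystem, communicates the outcome classically, and the other party then performs a projective measurement (depending on that outcome) whose result identifies with certainty which state of the set was shared. *)

theory Defs
  imports Complex_Main
begin

text \<open>An operator on \<open>\<complex>^4\<close> is a function \<open>nat \<Rightarrow> nat \<Rightarrow> complex\<close>
  (matrix entries), of which only indices \<open>< 4\<close> are relevant.  A state of
  \<open>\<complex>^4 \<otimes> \<complex>^4\<close> is a function \<open>nat \<Rightarrow> nat \<Rightarrow> complex\<close>, \<open>\<psi> j k\<close> being the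
  coefficient of \<open>|j>_A |k>_B\<close>.\<close>

type_synonym op4 = "nat \<Rightarrow> nat \<Rightarrow> complex"
type_synonym state44 = "nat \<Rightarrow> nat \<Rightarrow> complex"

definition dim4 :: nat where "dim4 = 4"

definition is_projector :: "op4 \<Rightarrow> bool" where
  "is_projector P \<longleftrightarrow>
     (\<forall>i<dim4. \<forall>j<dim4. P i j = cnj (P j i)) \<and>
     (\<forall>i<dim4. \<forall>j<dim4. (\<Sum>k<dim4. P i k * P k j) = P i j)"

definition proj_measurement :: "nat set \<Rightarrow> (nat \<Rightarrow> op4) \<Rightarrow> bool" where
  "proj_measurement K P \<longleftrightarrow>
     finite K \<and>
     (\<forall>a\<in>K. is_projector (P a)) \<and>
     (\<forall>a\<in>K. \<forall>b\<in>K. a \<noteq> b \<longrightarrow>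
        (\<forall>i<dim4. \<forall>j<dim4. (\<Sum>k<dim4. P a i k * P b k j) = 0)) \<and>
     (\<forall>i<dim4. \<forall>j<dim4. (\<Sum>a\<in>K. P a i j) = (if i = j then 1 else 0))"

definition bell :: "nat \<Rightarrow> nat \<Rightarrow> state44" where
  "bell n m = (\<lambda>j k. if j < dim4 \<and> k = (j + m) mod dim4
      then exp (2 * pi * \<i> * of_nat (j * n) / of_nat dim4) / 2 else 0)"

definition outcome_prob :: "state44 \<Rightarrow> op4 \<Rightarrow> op4 \<Rightarrow> complex" where
  "outcome_prob \<psi> A B =
     (\<Sum>i<dim4. \<Sum>j<dim4. \<Sum>i'<dim4. \<Sum>j'<dim4.
        cnj (\<psi> i j) * A i i' * B j j' * \<psi> i' j')"

definition one_way_alice_first :: "('l \<Rightarrow> state44) \<Rightarrow> 'l set \<Rightarrow> bool" where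
  "one_way_alice_first st S \<longleftrightarrow>
     (\<exists>K P. proj_measurement K P \<and>
        (\<forall>a\<in>K. \<exists>L Q. proj_measurement L Q \<and>
           (\<forall>b\<in>L. \<forall>x\<in>S. \<forall>y\<in>S.
               outcome_prob (st x) (P a) (Q b) \<noteq> 0 \<and>
               outcome_prob (st y) (P a) (Q b) \<noteq> 0 \<longrightarrow> x = y)))"

definition one_way_bob_first :: "('l \<Rightarrow> state44) \<Rightarrow> 'l set \<Rightarrow> bool" where
  "one_way_bob_first st S \<longleftrightarrow>
     (\<exists>L Q. proj_measurement L Q \<and>
        (\<forall>b\<in>L. \<exists>K P. proj_measurement K P \<and>
           (\<forall>a\<in>K. \<forall>x\<in>S. \<forall>y\<in>S.
               outcome_prob (st x) (P a) (Q b) \<noteq> 0 \<and>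
               outcome_prob (st y) (P a) (Q b) \<noteq> 0 \<longrightarrow> x = y)))"

definition one_way_projective_distinguishable :: "('l \<Rightarrow> state44) \<Rightarrow> 'l set \<Rightarrow> bool" where
  "one_way_projective_distinguishable st S \<longleftrightarrow>
     one_way_alice_first st S \<or> one_way_bob_first st S"

end

theory Submission
  imports Defs
begin

text \<open>Write \<open>\<zeta> = e^{i\<pi>/4}\<close>. Alice measures in the orthonormal basis
  \<open>u_a(j) = \<zeta>^{j\<^sup>2 + 2aj}/2\<close>. On outcome \<open>a\<close> the state \<open>\<psi>_{nm}\<close> leaves Bob with the vector
  \<open>\<zeta>^{2dn - d\<^sup>2 - 2ad}/2\<close> in the coordinate \<open>k\<close>, where \<open>d = k - m\<close>; this is well defined because
  the quadratic phase modulo 8 only depends on \<open>d\<close> modulo 4. Changing \<open>a\<close> multiplies these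
  vectors by a global phase and a common diagonal unitary, so orthogonality of Bob's four
  conditional vectors only needs to be checked for \<open>a = 0\<close>, which is a finite computation for
  each of the eight sets. Bob then measures in the basis formed by his (twisted) conditional
  vectors, and each of his outcomes is compatible with only one state.\<close>

definition root8 :: "int \<Rightarrow> complex" where "root8 k = cis (pi * of_int k / 4)"

lemma root8_add: "root8 k * root8 l = root8 (k + l)"
  unfolding root8_def by (simp add: cis_mult add_divide_distrib distrib_left)

lemma root8_cnj: "cnj (root8 k) = root8 (- k)"
  unfolding root8_def by (simp add: cis_cnj)

lemma cnj_root8_mult_self: "cnj (root8 k) * root8 k = 1"
  unfolding root8_cnj root8_add by (simp add: root8_def)

lemma root8_cong:
  assumes "k mod 8 = l mod 8"
  shows "root8 k = root8 l"
proof -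
  have "8 dvd k - l"
    using assms by (simp add: mod_eq_dvd_iff)
  then obtain q where "k = l + 8 * q"
    by (auto simp: algebra_simps elim!: dvdE)
  moreover have "root8 (8 * q) = 1"
    unfolding root8_def using cis_multiple_2pi[of "of_int q"] by (simp add: mult_ac)
  ultimately show ?thesis
    by (simp flip: root8_add)
qed

lemma root8_add_4: "root8 (k + 4) = - root8 k"
proof -
  have "root8 4 = -1"
    by (simp add: root8_def)
  then show ?thesis
    by (simp flip: root8_add)
qed

lemma root8_reduce:
  "root8 0 = 1"
  "4 \<le> k \<Longrightarrow> root8 k = - root8 (k - 4)"
  "k < 0 \<Longrightarrow> root8 k = - root8 (k + 4)"
  using root8_add_4[of "k - 4"] root8_add_4[of k] by (simp_all add: root8_def)

lemma root8_quadratic_cong: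
  fixes d e n a :: int
  assumes "d mod 4 = e mod 4"
  shows "root8 (2 * d * n - d\<^sup>2 - 2 * a * d) = root8 (2 * e * n - e\<^sup>2 - 2 * a * e)"
proof (rule root8_cong)
  have "4 dvd d - e"
    using assms by (simp add: mod_eq_dvd_iff)
  then obtain t where "d = e + 4 * t"
    by (auto simp: algebra_simps elim!: dvdE)
  then have shift: "2 * d * n - d\<^sup>2 - 2 * a * d
      = (2 * e * n - e\<^sup>2 - 2 * a * e) + 8 * (t * n - e * t - 2 * t\<^sup>2 - a * t)"
    by (simp add: power2_eq_square algebra_simps)
  show "(2 * d * n - d\<^sup>2 - 2 * a * d) mod 8 = (2 * e * n - e\<^sup>2 - 2 * a * e) mod 8"
    unfolding shift by (rule mod_mult_self2)
qed

lemma mod_add_shift_inverse: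
  fixes m n :: nat
  assumes "0 < n" "i < n"
  shows "((i + m) mod n + (n - m mod n)) mod n = i"
    and "((i + (n - m mod n)) mod n + m) mod n = i"
proof -
  have multiple: "m + (n - m mod n) = n * (m div n + 1)"
    using mult_div_mod_eq[of n m] mod_less_divisor[OF assms(1), of m]
    unfolding distrib_left mult_1_right by linarith
  have "((i + m) mod n + (n - m mod n)) mod n = (i + n * (m div n + 1)) mod n"
    by (simp only: mod_add_left_eq add.assoc multiple)
  also have "\<dots> = i"
    using assms(2) by (simp only: mod_mult_self2 mod_less)
  finally show "((i + m) mod n + (n - m mod n)) mod n = i" .
  have "i + (n - m mod n) + m = i + (m + (n - m mod n))"
    by linarith
  then have "((i + (n - m mod n)) mod n + m) mod n = (i + n * (m div n + 1)) mod n"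
    by (simp only: mod_add_left_eq multiple)
  also have "\<dots> = i"
    using assms(2) by (simp only: mod_mult_self2 mod_less)
  finally show "((i + (n - m mod n)) mod n + m) mod n = i" .
qed

lemma sum_lessThan_rotate:
  fixes m n :: nat
  assumes "0 < n"
  shows "(\<Sum>i<n. f ((i + m) mod n)) = (\<Sum>k<n. f k)"
  by (rule sum.reindex_bij_witness[where i = "\<lambda>k. (k + (n - m mod n)) mod n" and j = "\<lambda>i. (i + m) mod n"])
    (use assms mod_add_shift_inverse in auto)

text \<open>Completeness is part of the definition; for four orthonormal vectors in \<open>\<complex>^4\<close> it is
  automatic, but stating it avoids any dimension argument.\<close>
definition orthonormal_basis :: "(nat \<Rightarrow> nat \<Rightarrow> complex) \<Rightarrow> bool" where
  "orthonormal_basis V \<longleftrightarrow>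
     (\<forall>b<4. \<forall>b'<4. (\<Sum>k<4. cnj (V b k) * V b' k) = (if b = b' then 1 else 0)) \<and>
     (\<forall>i<4. \<forall>j<4. (\<Sum>b<4. V b i * cnj (V b j)) = (if i = j then 1 else 0))"

definition proj_on :: "(nat \<Rightarrow> complex) \<Rightarrow> op4" where
  "proj_on v = (\<lambda>i j. v i * cnj (v j))"

definition amplitude :: "(nat \<Rightarrow> complex) \<Rightarrow> (nat \<Rightarrow> complex) \<Rightarrow> state44 \<Rightarrow> complex" where
  "amplitude u v \<psi> = (\<Sum>i<4. \<Sum>j<4. cnj (u i) * cnj (v j) * \<psi> i j)"

lemma proj_measurement_proj_on:
  assumes "orthonormal_basis V"
  shows "proj_measurement {..<4} (\<lambda>b. proj_on (V b))"
proof -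
  have product: "(\<Sum>k<4. proj_on (V b) i k * proj_on (V b') k j)
      = V b i * (\<Sum>k<4. cnj (V b k) * V b' k) * cnj (V b' j)" for b b' i j
    unfolding proj_on_def by (simp add: sum_distrib_left sum_distrib_right mult_ac)
  show ?thesis
    using assms unfolding proj_measurement_def is_projector_def orthonormal_basis_def dim4_def
    by (auto simp: product) (auto simp: proj_on_def)
qed

lemma outcome_prob_proj_on:
  "outcome_prob \<psi> (proj_on u) (proj_on v) = cnj (amplitude u v \<psi>) * amplitude u v \<psi>"
proof -
  have "cnj (amplitude u v \<psi>) = (\<Sum>i<4. \<Sum>j<4. u i * v j * cnj (\<psi> i j))"
    by (simp add: amplitude_def)
  then have "cnj (amplitude u v \<psi>) * amplitude u v \<psi>
      = (\<Sum>i<4. \<Sum>j<4. u i * v j * cnj (\<psi> i j) * amplitude u v \<psi>)"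
    by (simp add: sum_distrib_right)
  also have "\<dots> = (\<Sum>i<4. \<Sum>j<4. \<Sum>i'<4. \<Sum>j'<4.
      u i * v j * cnj (\<psi> i j) * (cnj (u i') * cnj (v j') * \<psi> i' j'))"
    unfolding amplitude_def by (simp add: sum_distrib_left)
  finally show ?thesis
    unfolding outcome_prob_def proj_on_def dim4_def by (simp add: mult_ac)
qed

lemma one_way_alice_first_by_bases:
  assumes "orthonormal_basis U" and "\<And>a. a < 4 \<Longrightarrow> orthonormal_basis (V a)"
    and "\<And>a b x y. \<lbrakk>a < 4; b < 4; x \<in> S; y \<in> S;
          amplitude (U a) (V a b) (st x) \<noteq> 0; amplitude (U a) (V a b) (st y) \<noteq> 0\<rbrakk> \<Longrightarrow> x = y"
  shows "one_way_alice_first st S"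
proof -
  have "\<exists>L Q. proj_measurement L Q \<and> (\<forall>b\<in>L. \<forall>x\<in>S. \<forall>y\<in>S.
      outcome_prob (st x) (proj_on (U a)) (Q b) \<noteq> 0 \<and>
      outcome_prob (st y) (proj_on (U a)) (Q b) \<noteq> 0 \<longrightarrow> x = y)" if "a < 4" for a
    using proj_measurement_proj_on[OF assms(2)] assms(3) that
    by (intro exI[of _ "{..<4}"] exI[of _ "\<lambda>b. proj_on (V a b)"]) (auto simp: outcome_prob_proj_on)
  then show ?thesis
    unfolding one_way_alice_first_def using proj_measurement_proj_on[OF assms(1)] by blast
qed

lemma orthonormal_basis_phases:
  assumes "orthonormal_basis W"
    and "\<And>b. cnj (c b) * c b = 1" and "\<And>k. cnj (d k) * d k = 1"
  shows "orthonormal_basis (\<lambda>b k. c b * d k * W b k)"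
proof -
  have "cnj (c b * d k * W b k) * (c b' * d k * W b' k)
      = cnj (c b) * c b' * (cnj (d k) * d k) * (cnj (W b k) * W b' k)" for b b' k
    by (simp add: ac_simps)
  then have rows: "(\<Sum>k<4. cnj (c b * d k * W b k) * (c b' * d k * W b' k))
      = cnj (c b) * c b' * (\<Sum>k<4. cnj (W b k) * W b' k)" for b b'
    by (simp only: assms(3) mult_1_right sum_distrib_left)
  have "c b * d i * W b i * cnj (c b * d j * W b j)
      = d i * cnj (d j) * (cnj (c b) * c b) * (W b i * cnj (W b j))" for b i j
    by (simp add: ac_simps)
  then have columns: "(\<Sum>b<4. c b * d i * W b i * cnj (c b * d j * W b j))
      = d i * cnj (d j) * (\<Sum>b<4. W b i * cnj (W b j))" for i j
    by (simp only: assms(2) mult_1_right sum_distrib_left)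
  show ?thesis
    using assms unfolding orthonormal_basis_def rows columns by (auto simp: mult.commute)
qed

lemma all_less_four: "(\<forall>n<4::nat. P n) \<longleftrightarrow> P 0 \<and> P 1 \<and> P 2 \<and> P 3"
  by (auto simp: numeral_eq_Suc less_Suc_eq)

lemma sum_lessThan_four: "(\<Sum>k<4::nat. f k) = f 0 + f 1 + f 2 + f 3"
  by (simp add: numeral_eq_Suc)

lemma bell_root8:
  "bell n m j k = (if j < 4 \<and> k = (j + m) mod 4 then root8 (2 * int j * int n) / 2 else 0)"
proof -
  have "exp (2 * pi * \<i> * of_nat (j * n) / of_nat 4) = root8 (2 * int j * int n)"
    unfolding root8_def cis_conv_exp by (simp add: algebra_simps)
  then show ?thesis
    unfolding bell_def dim4_def by simp
qed

lemma amplitude_bell: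
  "amplitude u v (bell n m)
     = (\<Sum>i<4. cnj (u i) * root8 (2 * int i * int n) * cnj (v ((i + m) mod 4))) / 2"
proof -
  have row: "(\<Sum>j<4. cnj (u i) * cnj (v j) * bell n m i j)
      = cnj (u i) * root8 (2 * int i * int n) * cnj (v ((i + m) mod 4)) / 2" if "i < 4" for i
    using that by (simp add: bell_root8 if_distrib[of "\<lambda>x. _ * x"] sum.delta' cong: if_cong)
  show ?thesis
    unfolding amplitude_def sum_divide_distrib by (rule sum.cong) (simp_all add: row)
qed

definition alice_basis :: "nat \<Rightarrow> nat \<Rightarrow> complex" where
  "alice_basis a j = root8 (int j ^ 2 + 2 * int a * int j) / 2"

definition bob_state :: "nat \<Rightarrow> nat \<times> nat \<Rightarrow> nat \<Rightarrow> complex" where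
  "bob_state a x k = root8 (2 * (int k - int (snd x)) * int (fst x) - (int k - int (snd x))\<^sup>2
                             - 2 * int a * (int k - int (snd x))) / 2"

lemma bob_state_phase:
  "bob_state a x k = root8 (2 * int a * int (snd x)) * root8 (- 2 * int a * int k) * bob_state 0 x k"
  unfolding bob_state_def by (simp add: root8_add algebra_simps)

lemma orthonormal_basis_alice_basis: "orthonormal_basis alice_basis"
  unfolding orthonormal_basis_def alice_basis_def
  by (simp add: all_less_four sum_lessThan_four root8_cnj root8_add root8_reduce)

lemma amplitude_alice_bell:
  "amplitude (alice_basis a) v (bell n m) = (\<Sum>k<4. cnj (v k) * bob_state a (n, m) k) / 2"
proof -
  have phase: "cnj (alice_basis a i) * root8 (2 * int i * int n) = bob_state a (n, m) ((i + m) mod 4)" for i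
  proof -
    have "cnj (alice_basis a i) * root8 (2 * int i * int n)
        = root8 (- (int i ^ 2 + 2 * int a * int i) + 2 * int i * int n) / 2"
      unfolding alice_basis_def by (simp add: root8_cnj root8_add)
    also have "\<dots> = root8 (2 * int i * int n - (int i)\<^sup>2 - 2 * int a * int i) / 2"
      by (simp add: algebra_simps)
    also have "\<dots> = bob_state a (n, m) ((i + m) mod 4)"
    proof -
      have "(int i) mod 4 = (int ((i + m) mod 4) - int m) mod 4"
        by (simp add: of_nat_mod mod_diff_left_eq)
      from root8_quadratic_cong[OF this, of "int n" "int a"] show ?thesis
        unfolding bob_state_def by simp
    qed
    finally show ?thesis .
  qed
  have "amplitude (alice_basis a) v (bell n m)
      = (\<Sum>i<4. cnj (v ((i + m) mod 4)) * bob_state a (n, m) ((i + m) mod 4)) / 2"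
    unfolding amplitude_bell phase[symmetric] by (simp add: mult_ac)
  then show ?thesis
    using sum_lessThan_rotate[of 4 "\<lambda>k. cnj (v k) * bob_state a (n, m) k" m] by simp
qed

lemma one_way_bell_by_bob_basis:
  assumes "length xs = 4" and "orthonormal_basis (\<lambda>b. bob_state 0 (xs ! b))"
  shows "one_way_projective_distinguishable (\<lambda>(n, m). bell n m) (set xs)"
proof -
  have onb: "orthonormal_basis (\<lambda>b. bob_state a (xs ! b))" for a
    using orthonormal_basis_phases[OF assms(2), of "\<lambda>b. root8 (2 * int a * int (snd (xs ! b)))"
        "\<lambda>k. root8 (- 2 * int a * int k)"]
    unfolding bob_state_phase[of a] by (simp add: cnj_root8_mult_self)
  have "x = xs ! b"
    if b: "b < 4" and x: "x \<in> set xs"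
      and nonzero: "amplitude (alice_basis a) (bob_state a (xs ! b)) (case x of (n, m) \<Rightarrow> bell n m) \<noteq> 0"
    for a b x
  proof -
    obtain c where c: "c < 4" "x = xs ! c"
      using x assms(1) by (auto simp: in_set_conv_nth)
    have "amplitude (alice_basis a) (bob_state a (xs ! b)) (case x of (n, m) \<Rightarrow> bell n m)
        = (\<Sum>k<4. cnj (bob_state a (xs ! b) k) * bob_state a (xs ! c) k) / 2"
      using amplitude_alice_bell by (simp add: c(2) split: prod.split)
    also have "\<dots> = (if b = c then 1 else 0) / 2"
      using onb[of a] b c(1) unfolding orthonormal_basis_def by simp
    finally show ?thesis
      using nonzero c(2) by (auto split: if_splits)
  qed
  then show ?thesis
    unfolding one_way_projective_distinguishable_def
    by (intro disjI1 one_way_alice_first_by_bases[OF orthonormal_basis_alice_basis onb]) blast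
qed

theorem theorem5:
  shows "\<forall>T \<in> {{(0,1),(0,2),(1,2)}, {(0,1),(0,2),(3,0)}, {(0,1),(1,1),(2,1)},
                {(0,1),(1,2),(2,0)}, {(0,1),(2,0),(3,0)}, {(0,1),(2,1),(3,3)},
                {(0,2),(1,0),(2,1)}, {(0,2),(2,1),(3,2)}}.
           one_way_projective_distinguishable (\<lambda>(n, m). bell n m)
             (insert ((0::nat), (0::nat)) T)"
proof -
  define lists :: "(nat \<times> nat) list list" where
    "lists = [[(0,0),(0,1),(0,2),(1,2)], [(0,0),(0,1),(0,2),(3,0)], [(0,0),(0,1),(1,1),(2,1)],
              [(0,0),(0,1),(1,2),(2,0)], [(0,0),(0,1),(2,0),(3,0)], [(0,0),(0,1),(2,1),(3,3)],
              [(0,0),(0,2),(1,0),(2,1)], [(0,0),(0,2),(2,1),(3,2)]]"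
  have "\<forall>xs \<in> set lists. length xs = 4 \<and> orthonormal_basis (\<lambda>b. bob_state 0 (xs ! b))"
    unfolding lists_def orthonormal_basis_def bob_state_def
    by (simp add: all_less_four sum_lessThan_four root8_cnj root8_add root8_reduce)
  then have "\<forall>xs \<in> set lists. one_way_projective_distinguishable (\<lambda>(n, m). bell n m) (set xs)"
    using one_way_bell_by_bob_basis by blast
  then show ?thesis
    unfolding lists_def by (simp only: list.set ball_simps)
qed

end
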